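(* Consider Algorithm iR2N (described in the context), suppose (A1), (A2), (A3), (A4), (A6), (A7) hold and that the algorithm generates infinitely many successful iterations. Let $\epsilon>0$, $k_\epsilon=\min\{k\in\mathbb{N}\mid \nu_k^{-1}\|\hat s_{k,\mathrm{cp}}\|<\epsilon\}$ and $\mathcal{S}(\epsilon)=\{k\in\mathbb{N}\mid \hat\rho_k\ge\hat\eta_1,\ k<k_\epsilon\}$. Then $$|\mathcal{S}(\epsilon)|\le \frac{(f+h)(x_0)-(f+h)_{\mathrm{low}}}{\tfrac12\eta_1(1-\theta_1)\nu_{\min}}\,\epsilon^{-2}=:\omega_s\epsilon^{-2}.$$
   Context: Setting. $f:\mathbb{R}^n\to\mathbb{R}$ is continuously differentiable, $h:\mathbb{R}^n\to\mathbb{R}\cup\{+\infty\}$ is proper and lower semicontinuous; the problem is $\min_x f(x)+h(x)$. $\|\cdot\|$ is the Euclidean norm (spectral norm for matrices). For each $x$, approximations $\hat f(x)\in\mathbb{R}$ of $f(x)$ and $\hat\nabla f(x)\in\mathbb{R}^n$ of $\nabla f(x)$ are available. For each $x$, $\psi(\cdot;x):\mathbb{R}^n\to\mathbb{R}\cup\{+\infty\}$ is proper, lsc, satisfies $\psi(0;x)=h(x)$ and $\partial\psi(0;x)\subseteq\partial h(x)$ ($\partial$ = limiting subdifferential), and is uniformly prox-bounded: there is $\lambda>0$ such that for every $x$ and every $0<\lambda'<\lambda$, $w\mapsto\psi(w;x)+\tfrac{1}{2\lambda'}\|w\|^2$ is bounded below. Models: $\varphi_{\mathrm{cp}}(s;x)=\hat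 f(x)+\hat\nabla f(x)^Ts$; $m_{\mathrm{cp}}(s;x,\nu^{-1})=\varphi_{\mathrm{cp}}(s;x)+\tfrac12\nu^{-1}\|s\|^2+\psi(s;x)$; for a symmetric $B(x)\in\mathbb{R}^{n\times n}$, $\varphi(s;x)=\hat f(x)+\hat\nabla f(x)^Ts+\tfrac12 s^TB(x)s$ and $m(s;x,\sigma)=\varphi(s;x)+\tfrac12\sigma\|s\|^2+\psi(s;x)$. Algorithm iR2N. Constants: $\kappa_f,\kappa_\nabla>0$, $0<\gamma_3\le 1<\gamma_1\le\gamma_2$, $0<\hat\eta_1\le\hat\eta_2<1$, $0<\theta_1<1<\theta_2$, $\sigma_{\min}>4\kappa_f\theta_1\theta_2^2/(\hat\eta_1(1-\theta_1))$, $\sigma_0\ge\sigma_{\min}$, $x_0\in\mathbb{R}^n$. At iteration $k=0,1,\dots$: choose symmetric $B_k=B(x_k)$; set $\nu_k=\theta_1/(\|B_k\|+\sigma_k)$; compute $\hat s_{k,\mathrm{cp}}$ with $m_{\mathrm{cp}}(\hat s_{k,\mathrm{cp}};x_k,\nu_k^{-1})\le m_{\mathrm{cp}}(0;x_k,\nu_k^{-1})$ (an approximate minimizer of $m_{\mathrm{cp}}(\cdot;x_k,\nu_k^{-1})$ obtained by a descent procedure from $s=0$) and set $\hat\xi_{k,\mathrm{cp}}=(\varphi_{\mathrm{cp}}+\psi)(0;x_k)-(\varphi_{\mathrm{cp}}+\psi)(\hat s_{k,\mathrm{cp}};x_k)$; compute $s_k$ with $m(s_k;x_k,\sigma_k)\le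 m(\hat s_{k,\mathrm{cp}};x_k,\sigma_k)$; if $\|s_k\|>\theta_2\|\hat s_{k,\mathrm{cp}}\|$, reset $s_k=\hat s_{k,\mathrm{cp}}$ (these computations are repeated with refined $\hat f,\hat\nabla f$ until (A6) holds). Compute $$\hat\rho_k=\frac{\hat f(x_k)+h(x_k)-\hat f(x_k+s_k)-h(x_k+s_k)}{\varphi(0;x_k)+\psi(0;x_k)-\varphi(s_k;x_k)-\psi(s_k;x_k)},$$ where $\varphi(\cdot;x_k)$ uses $B_k$. If $\hat\rho_k\ge\hat\eta_1$ (successful) set $x_{k+1}=x_k+s_k$, else $x_{k+1}=x_k$. Choose $\sigma_{k+1}\in[\gamma_3\sigma_k,\sigma_k]$ if $\hat\rho_k\ge\hat\eta_2$ (very successful), $\sigma_{k+1}\in[\sigma_k,\gamma_1\sigma_k]$ if $\hat\eta_1\le\hat\rho_k<\hat\eta_2$, $\sigma_{k+1}\in[\gamma_1\sigma_k,\gamma_2\sigma_k]$ if $\hat\rho_k<\hat\eta_1$; then reset $\sigma_{k+1}=\max(\sigma_{k+1},\sigma_{\min})$. Assumptions. (A1) $|f(x+s)-f(x)-\nabla f(x)^Ts|\le\tfrac12L\|s\|^2$ for all $x,s$, for some $L\ge0$. (A2) $\|B_k\|\le\kappa_B$ for all $k$, for some $\kappa_B>0$. (A3) $|\psi(s;x)-h(x+s)|\le\kappa_h\|s\|^2$ for all $x,s$, for some $\kappa_h>0$. (A4) For all $k$, $\varphi(0;x_k)+\psi(0;x_k)-(\varphi(s_k;x_k)+\psi(s_k;x_k))\ge(1-\theta_1)\hat\xi_{k,\mathrm{cp}}$.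 (A6) For all $k$: $|f(x_k)-\hat f(x_k)|\le\kappa_f\|s_k\|^2$, $|f(x_k+s_k)-\hat f(x_k+s_k)|\le\kappa_f\|s_k\|^2$, $\|\nabla f(x_k)-\hat\nabla f(x_k)\|\le\kappa_\nabla\|s_k\|$. (A7) There is $(f+h)_{\mathrm{low}}\in\mathbb{R}$ with $(f+h)(x)\ge(f+h)_{\mathrm{low}}$ for all $x$. Constants: $\eta_1=\hat\eta_1-4\kappa_f\theta_1\theta_2^2/((1-\theta_1)\sigma_{\min})$; $\sigma_{\mathrm{succ}}=\max\big(\theta_1\theta_2^2(L+\kappa_B+2\kappa_h+4\kappa_f+2\kappa_\nabla)/((1-\theta_1)(1-\hat\eta_2)),\ \lambda^{-1}\big)$; $\sigma_{\max}=\max(\sigma_0,\gamma_2\sigma_{\mathrm{succ}})$ (an upper bound on all $\sigma_k$); $\nu_{\min}=\theta_1/(\kappa_B+\sigma_{\max})$, so that $\nu_k\ge\nu_{\min}$ for all $k$. *)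

theory Defs
  imports "HOL-Analysis.Analysis"
begin

definition lsc :: "('a::metric_space \<Rightarrow> ereal) \<Rightarrow> bool" where
  "lsc g \<longleftrightarrow> (\<forall>y X. X \<longlonglongrightarrow> y \<longrightarrow> g y \<le> liminf (\<lambda>k. g (X k)))"

definition proper_fun :: "('a \<Rightarrow> ereal) \<Rightarrow> bool" where
  "proper_fun g \<longleftrightarrow> (\<forall>y. g y \<noteq> -\<infinity>) \<and> (\<exists>y. g y \<noteq> \<infinity>)"

definition frechet_subdiff :: "('a::real_inner \<Rightarrow> ereal) \<Rightarrow> 'a \<Rightarrow> 'a set" where
  "frechet_subdiff g x = {v. \<bar>g x\<bar> \<noteq> \<infinity> \<and>
     (\<forall>e>0. \<exists>d>0. \<forall>y. norm (y - x) < d \<longrightarrow>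
         g y \<ge> g x + ereal (inner v (y - x) - e * norm (y - x)))}"

definition limiting_subdiff :: "('a::real_inner \<Rightarrow> ereal) \<Rightarrow> 'a \<Rightarrow> 'a set" where
  "limiting_subdiff g x = {v. \<exists>X V. X \<longlonglongrightarrow> x \<and> (\<lambda>k. g (X k)) \<longlonglongrightarrow> g x \<and>
     (\<forall>k. V k \<in> frechet_subdiff g (X k)) \<and> V \<longlonglongrightarrow> v}"

end

(* While the criticality measure norm s_cp / nu stays at least eps, the Cauchy-point
   decrease and (A4) give every step a model decrease of at least
   (1 - theta1)/2 * norm s_cp^2 / nu >= (1 - theta1)/2 * nu_min * eps^2.  Since
   sigma * norm s^2 is bounded by a multiple of the model decrease, the errors of the
   f estimates cost a successful step at most the fraction
   4 kappa_f theta1 theta2^2 / ((1 - theta1) sigma_min) of it, so f + h drops by at least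
   eta1 times the model decrease.  The same bound shows that the model error is then
   below (1 - eta2) times the model decrease once sigma >= sigma_succ: such iterations are
   very successful, so sigma never exceeds sigma_max and nu never drops below nu_min.
   Unsuccessful iterations leave x unchanged, and f + h is bounded below by
   (f + h)_low, which bounds the number of successful iterations. *)

theory Submission
  imports Defs
begin

lemma abs_ereal_diff_le_imp_real:
  fixes a b :: ereal
  assumes "\<bar>a - b\<bar> \<le> ereal c"
  shows "a = ereal (real_of_ereal a)" and "b = ereal (real_of_ereal b)"
  using assms by (cases a; cases b; simp)+

lemma abs_inner_le_onorm:
  assumes "bounded_linear T"
  shows "\<bar>t \<bullet> T t\<bar> \<le> onorm T * (norm t)\<^sup>2"
proof -
  have "\<bar>t \<bullet> T t\<bar> \<le> norm t * norm (T t)"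
    by (rule Cauchy_Schwarz_ineq2)
  also have "\<dots> \<le> norm t * (onorm T * norm t)"
    by (rule mult_left_mono[OF onorm[OF assms]]) simp
  finally show ?thesis
    by (simp add: power2_eq_square mult_ac)
qed

lemma norm_safeguarded_step_le:
  fixes t u :: "'a::real_normed_vector"
  assumes "1 \<le> c"
  shows "norm (if norm t > c * norm u then u else t) \<le> c * norm u"
  using assms mult_right_mono[OF assms norm_ge_zero[of u]] by auto

lemma card_mult_le_total_decrease:
  fixes F :: "nat \<Rightarrow> real"
  assumes "\<And>k. k < n \<Longrightarrow> F (Suc k) \<le> F k"
    and "\<And>k. k < n \<Longrightarrow> P k \<Longrightarrow> F (Suc k) + \<delta> \<le> F k"
  shows "\<delta> * card {k. P k \<and> k < n} \<le> F 0 - F n"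
  using assms
proof (induction n)
  case 0
  then show ?case by simp
next
  case (Suc n)
  then have IH: "\<delta> * card {k. P k \<and> k < n} \<le> F 0 - F n"
    by simp
  show ?case
  proof (cases "P n")
    case True
    then have "{k. P k \<and> k < Suc n} = insert n {k. P k \<and> k < n}"
      by auto
    then show ?thesis
      using IH Suc.prems(2)[of n] True by (simp add: algebra_simps)
  next
    case False
    then have "{k. P k \<and> k < Suc n} = {k. P k \<and> k < n}"
      using less_Suc_eq by auto
    then show ?thesis
      using IH Suc.prems(1)[of n] by simp
  qed
qed

locale ir2n_run =
  fixes f :: "'a::real_inner \<Rightarrow> real" and gradf :: "'a \<Rightarrow> 'a"
    and h :: "'a \<Rightarrow> ereal" and psi :: "'a \<Rightarrow> 'a \<Rightarrow> ereal"
    and hr :: "'a \<Rightarrow> real" and pr :: "'a \<Rightarrow> 'a \<Rightarrow> real"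
      (* real-valued versions of h and psi, which (A3) forces to be finite; as parameters
         rather than definitions through real_of_ereal, h_eq_hr does not loop in simp *)
    and B :: "nat \<Rightarrow> 'a \<Rightarrow> 'a"
    and fh0 fh1 :: "nat \<Rightarrow> real" and gh :: "nat \<Rightarrow> 'a"
    and x s scp :: "nat \<Rightarrow> 'a" and sigma nu :: "nat \<Rightarrow> real"
    and phi phicp :: "nat \<Rightarrow> 'a \<Rightarrow> ereal" and xicp rho :: "nat \<Rightarrow> ereal"
    and kf kg g1 g2 g3 eh1 eh2 th1 th2 smin s0 L kB kh low eta1 ssucc smax numin :: real
  assumes nu_def: "nu k = th1 / (onorm (B k) + sigma k)"
    and phicp_def: "phicp k t = ereal (fh0 k + gh k \<bullet> t)"
    and phi_def: "phi k t = ereal (fh0 k + gh k \<bullet> t + 1/2 * (t \<bullet> B k t))"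
    and xicp_def: "xicp k = (phicp k 0 + psi 0 (x k)) - (phicp k (scp k) + psi (scp k) (x k))"
    and rho_def: "rho k = (ereal (fh0 k) + h (x k) - ereal (fh1 k) - h (x k + s k)) /
                     (phi k 0 + psi 0 (x k) - phi k (s k) - psi (s k) (x k))"
    and eta1_def: "eta1 = eh1 - 4 * kf * th1 * th2^2 / ((1 - th1) * smin)"
    and ssucc_ge: "th1 * th2^2 * (L + kB + 2*kh + 4*kf + 2*kg) / ((1 - th1) * (1 - eh2)) \<le> ssucc"
    and smax_def: "smax = max s0 (g2 * ssucc)"
    and numin_def: "numin = th1 / (kB + smax)"
    and h_eq_hr: "h y = ereal (hr y)" and psi_eq_pr: "psi t y = ereal (pr t y)"
    and psi_0: "psi 0 y = h y"
    and B_linear: "bounded_linear (B k)"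
    and kf_pos: "kf > 0" and kg_pos: "kg > 0"
    and gam: "1 < g1" "g1 \<le> g2"
    and etah: "0 < eh1" "eh1 \<le> eh2" "eh2 < 1"
    and theta: "0 < th1" "th1 < 1" "1 < th2"
    and smin: "smin > 4 * kf * th1 * th2^2 / (eh1 * (1 - th1))"
    and s0: "s0 \<ge> smin"
    and sigma_0: "sigma 0 = s0"
    and cp_step: "phicp k (scp k) + ereal (1/2 * (1 / nu k) * (norm (scp k))^2) + psi (scp k) (x k)
                   \<le> phicp k 0 + ereal (1/2 * (1 / nu k) * (norm (0::'a))^2) + psi 0 (x k)"
    and s_step: "\<exists>t. phi k t + ereal (1/2 * sigma k * (norm t)^2) + psi t (x k)
                        \<le> phi k (scp k) + ereal (1/2 * sigma k * (norm (scp k))^2) + psi (scp k) (x k)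
                      \<and> s k = (if norm t > th2 * norm (scp k) then scp k else t)"
    and x_step: "x (Suc k) = (if rho k \<ge> ereal eh1 then x k + s k else x k)"
    and sigma_step: "\<exists>sg. (rho k \<ge> ereal eh2 \<longrightarrow> g3 * sigma k \<le> sg \<and> sg \<le> sigma k)
                     \<and> (ereal eh1 \<le> rho k \<and> rho k < ereal eh2 \<longrightarrow> sigma k \<le> sg \<and> sg \<le> g1 * sigma k)
                     \<and> (rho k < ereal eh1 \<longrightarrow> g1 * sigma k \<le> sg \<and> sg \<le> g2 * sigma k)
                     \<and> sigma (Suc k) = max sg smin"
    and A1: "L \<ge> 0" "\<bar>f (y + t) - f y - gradf y \<bullet> t\<bar> \<le> 1/2 * L * (norm t)^2"
    and A2: "kB > 0" "onorm (B k) \<le> kB"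
    and A3: "kh > 0" "\<bar>psi t y - h (y + t)\<bar> \<le> ereal (kh * (norm t)^2)"
    and A4: "phi k 0 + psi 0 (x k) - (phi k (s k) + psi (s k) (x k)) \<ge> ereal (1 - th1) * xicp k"
    and A6: "\<bar>f (x k) - fh0 k\<bar> \<le> kf * (norm (s k))^2"
            "\<bar>f (x k + s k) - fh1 k\<bar> \<le> kf * (norm (s k))^2"
            "norm (gradf (x k) - gh k) \<le> kg * norm (s k)"
    and A7: "ereal (f y) + h y \<ge> ereal low"
begin

lemma pr_0: "pr 0 y = hr y"
  using psi_0[of y] by (simp add: h_eq_hr psi_eq_pr)

definition objective :: "'a \<Rightarrow> real" where "objective y = f y + hr y"

definition cp_decrease :: "nat \<Rightarrow> real" where
  "cp_decrease k = hr (x k) - gh k \<bullet> scp k - pr (scp k) (x k)"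

definition model_decrease :: "nat \<Rightarrow> real" where
  "model_decrease k = hr (x k) - gh k \<bullet> s k - 1/2 * (s k \<bullet> B k (s k)) - pr (s k) (x k)"

definition estimated_decrease :: "nat \<Rightarrow> real" where
  "estimated_decrease k = fh0 k + hr (x k) - fh1 k - hr (x k + s k)"

lemma rho_eq: "rho k = ereal (estimated_decrease k) / ereal (model_decrease k)"
proof -
  have "ereal (fh0 k) + h (x k) - ereal (fh1 k) - h (x k + s k) = ereal (estimated_decrease k)"
    by (simp add: h_eq_hr estimated_decrease_def)
  moreover have "phi k 0 + psi 0 (x k) - phi k (s k) - psi (s k) (x k) = ereal (model_decrease k)"
    by (simp add: phi_def psi_eq_pr pr_0 model_decrease_def)
  ultimately show ?thesis
    by (simp only: rho_def)
qed

lemma norm_scp_sq_div_nu_le: "norm (scp k)^2 / nu k \<le> 2 * cp_decrease k"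
proof -
  have "1/2 * (1 / nu k) * norm (scp k)^2 \<le> cp_decrease k"
    using cp_step[of k] unfolding phicp_def psi_eq_pr pr_0 cp_decrease_def by simp
  moreover have "norm (scp k)^2 / nu k = 2 * (1/2 * (1 / nu k) * norm (scp k)^2)"
    by simp
  ultimately show ?thesis
    by linarith
qed

lemma model_decrease_ge_cp_decrease: "(1 - th1) * cp_decrease k \<le> model_decrease k"
  using A4[of k] unfolding phi_def xicp_def phicp_def psi_eq_pr pr_0
    model_decrease_def cp_decrease_def
  by (simp add: algebra_simps)

lemma norm_s_le: "norm (s k) \<le> th2 * norm (scp k)"
proof -
  obtain t where "s k = (if norm t > th2 * norm (scp k) then scp k else t)"
    using s_step[of k] by blast
  then show ?thesis
    using norm_safeguarded_step_le[where c=th2 and t=t and u="scp k"] theta(3) by simp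
qed

lemma abs_estimated_decrease_diff_le:
  "\<bar>estimated_decrease k - model_decrease k\<bar> \<le> (L + kB + 2*kh + 4*kf + 2*kg) / 2 * norm (s k)^2"
proof -
  let ?n = "norm (s k)^2"
  have "\<bar>fh0 k - f (x k)\<bar> \<le> kf * ?n"
    using A6(1)[of k] by (simp add: abs_minus_commute)
  moreover have "\<bar>f (x k + s k) - fh1 k\<bar> \<le> kf * ?n"
    using A6(2)[of k] by simp
  moreover have "\<bar>f (x k + s k) - f (x k) - gradf (x k) \<bullet> s k\<bar> \<le> L / 2 * ?n"
    using A1(2)[of "x k" "s k"] by simp
  moreover have "\<bar>(gh k - gradf (x k)) \<bullet> s k\<bar> \<le> kg * ?n"
  proof -
    have "\<bar>(gh k - gradf (x k)) \<bullet> s k\<bar> \<le> norm (gh k - gradf (x k)) * norm (s k)"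
      by (rule Cauchy_Schwarz_ineq2)
    also have "\<dots> \<le> kg * norm (s k) * norm (s k)"
      using A6(3)[of k] by (simp add: norm_minus_commute mult_right_mono)
    finally show ?thesis by (simp add: power2_eq_square)
  qed
  moreover have "\<bar>s k \<bullet> B k (s k)\<bar> \<le> kB * ?n"
    using abs_inner_le_onorm[OF B_linear, of "s k" k] A2(2)[of k]
    by (meson mult_right_mono order_trans zero_le_power2)
  moreover have "\<bar>pr (s k) (x k) - hr (x k + s k)\<bar> \<le> kh * ?n"
    using A3(2)[of "s k" "x k"] by (simp add: h_eq_hr psi_eq_pr)
  moreover have "estimated_decrease k - model_decrease k = (fh0 k - f (x k)) + (f (x k + s k) - fh1 k)
      - (f (x k + s k) - f (x k) - gradf (x k) \<bullet> s k) + (gh k - gradf (x k)) \<bullet> s k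
      + 1/2 * (s k \<bullet> B k (s k)) + (pr (s k) (x k) - hr (x k + s k))"
    unfolding estimated_decrease_def model_decrease_def by (simp add: inner_diff_left algebra_simps)
  ultimately have "\<bar>estimated_decrease k - model_decrease k\<bar>
      \<le> kf * ?n + kf * ?n + L / 2 * ?n + kg * ?n + 1/2 * (kB * ?n) + kh * ?n"
    by linarith
  also have "\<dots> = (L + kB + 2*kh + 4*kf + 2*kg) / 2 * ?n"
    by (simp add: algebra_simps)
  finally show ?thesis .
qed

lemma smin_pos: "0 < smin"
proof -
  have "0 < 4 * kf * th1 * th2^2 / (eh1 * (1 - th1))"
    using kf_pos theta etah by simp
  then show ?thesis
    using smin by linarith
qed

lemma sigma_ge_smin: "smin \<le> sigma k"
proof (cases k)
  case 0
  then show ?thesis using sigma_0 s0 by simp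
next
  case (Suc j)
  obtain sg where "sigma (Suc j) = max sg smin"
    using sigma_step[of j] by blast
  then show ?thesis using Suc by simp
qed

lemma sigma_pos: "0 < sigma k"
  using smin_pos sigma_ge_smin[of k] by linarith

lemma onorm_B_nonneg: "0 \<le> onorm (B k)"
  by (rule onorm_pos_le[OF B_linear])

lemma nu_pos: "0 < nu k"
  unfolding nu_def using theta onorm_B_nonneg[of k] sigma_pos[of k] by simp

lemma sigma_le_div_nu: "sigma k \<le> th1 / nu k"
  unfolding nu_def using theta onorm_B_nonneg[of k] by simp

lemma model_decrease_ge_norm_scp_sq: "(1 - th1) / 2 * (norm (scp k)^2 / nu k) \<le> model_decrease k"
proof -
  have "(1 - th1) / 2 * (norm (scp k)^2 / nu k) \<le> (1 - th1) / 2 * (2 * cp_decrease k)"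
    using theta by (intro mult_left_mono norm_scp_sq_div_nu_le) simp
  also have "\<dots> = (1 - th1) * cp_decrease k"
    by simp
  also have "\<dots> \<le> model_decrease k"
    by (rule model_decrease_ge_cp_decrease)
  finally show ?thesis .
qed

lemma model_decrease_nonneg: "0 \<le> model_decrease k"
proof -
  have "0 \<le> (1 - th1) / 2 * (norm (scp k)^2 / nu k)"
    using theta nu_pos[of k] by simp
  then show ?thesis
    using model_decrease_ge_norm_scp_sq[of k] by linarith
qed

lemma model_decrease_pos:
  assumes "scp k \<noteq> 0"
  shows "0 < model_decrease k"
proof -
  have "0 < (1 - th1) / 2 * (norm (scp k)^2 / nu k)"
    using assms theta nu_pos[of k] by simp
  then show ?thesis
    using model_decrease_ge_norm_scp_sq[of k] by linarith
qed

lemma sigma_norm_scp_sq_le: "(1 - th1) * sigma k * norm (scp k)^2 \<le> 2 * th1 * model_decrease k"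
proof -
  have "sigma k * norm (scp k)^2 \<le> th1 / nu k * norm (scp k)^2"
    using sigma_le_div_nu by (rule mult_right_mono) simp
  then have "(1 - th1) * (sigma k * norm (scp k)^2) \<le> (1 - th1) * (th1 / nu k * norm (scp k)^2)"
    by (rule mult_left_mono) (use theta in simp)
  also have "\<dots> = 2 * th1 * ((1 - th1) / 2 * (norm (scp k)^2 / nu k))"
    using nu_pos[of k] by (simp add: field_simps)
  also have "\<dots> \<le> 2 * th1 * model_decrease k"
    using model_decrease_ge_norm_scp_sq theta by (intro mult_left_mono) auto
  finally show ?thesis
    by (simp add: mult.assoc)
qed

lemma sigma_norm_s_sq_le: "(1 - th1) * sigma k * norm (s k)^2 \<le> 2 * th1 * th2^2 * model_decrease k"
proof -
  have "norm (s k)^2 \<le> th2^2 * norm (scp k)^2"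
    using power_mono[OF norm_s_le[of k] norm_ge_zero, of 2] by (simp add: power_mult_distrib)
  then have "(1 - th1) * sigma k * norm (s k)^2 \<le> th2^2 * ((1 - th1) * sigma k * norm (scp k)^2)"
    using theta sigma_pos[of k] by (simp add: mult_left_mono mult.left_commute)
  also have "\<dots> \<le> th2^2 * (2 * th1 * model_decrease k)"
    using sigma_norm_scp_sq_le by (rule mult_left_mono) simp
  finally show ?thesis
    by (simp add: mult_ac)
qed

lemma abs_estimated_decrease_diff_le_if_sigma_ge:
  assumes "ssucc \<le> sigma k"
  shows "\<bar>estimated_decrease k - model_decrease k\<bar> \<le> (1 - eh2) * model_decrease k"
proof -
  let ?C = "L + kB + 2*kh + 4*kf + 2*kg"
  let ?a = "(1 - th1) * sigma k"
  have "th1 * th2^2 * ?C \<le> ssucc * ((1 - th1) * (1 - eh2))"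
    using ssucc_ge theta etah by (simp add: pos_divide_le_eq)
  also have "\<dots> \<le> sigma k * ((1 - th1) * (1 - eh2))"
    using assms theta etah by (intro mult_right_mono) auto
  finally have C_le: "th1 * th2^2 * ?C \<le> ?a * (1 - eh2)"
    by (simp add: mult_ac)
  have "?a * (?C / 2 * norm (s k)^2) = ?C / 2 * (?a * norm (s k)^2)"
    by (simp add: mult_ac)
  also have "\<dots> \<le> ?C / 2 * (2 * th1 * th2^2 * model_decrease k)"
    using sigma_norm_s_sq_le A1(1) A2(1) A3(1) kf_pos kg_pos by (intro mult_left_mono) auto
  also have "\<dots> = th1 * th2^2 * ?C * model_decrease k"
    by (simp add: algebra_simps)
  also have "\<dots> \<le> ?a * ((1 - eh2) * model_decrease k)"
    using mult_right_mono[OF C_le model_decrease_nonneg] by (simp add: mult_ac)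
  finally have "?C / 2 * norm (s k)^2 \<le> (1 - eh2) * model_decrease k"
    by (rule mult_left_le_imp_le) (use theta sigma_pos[of k] in simp)
  then show ?thesis
    using abs_estimated_decrease_diff_le[of k] by linarith
qed

lemma very_successful_if_sigma_ge:
  assumes "scp k \<noteq> 0" and "ssucc \<le> sigma k"
  shows "ereal eh2 \<le> rho k"
proof -
  have "eh2 * model_decrease k \<le> estimated_decrease k"
    using abs_estimated_decrease_diff_le_if_sigma_ge[OF assms(2)] by (simp add: algebra_simps abs_le_iff)
  then show ?thesis
    unfolding rho_eq using model_decrease_pos[OF assms(1)] by (simp add: pos_le_divide_eq)
qed

lemma sigma_le_smax:
  assumes "\<And>j. j < k \<Longrightarrow> scp j \<noteq> 0"
  shows "sigma k \<le> smax"
  using assms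
proof (induction k)
  case 0
  then show ?case using sigma_0 smax_def by simp
next
  case (Suc k)
  then have IH: "sigma k \<le> smax" and "scp k \<noteq> 0"
    by auto
  obtain sg where sg:
      "ereal eh2 \<le> rho k \<longrightarrow> g3 * sigma k \<le> sg \<and> sg \<le> sigma k"
      "ereal eh1 \<le> rho k \<and> rho k < ereal eh2 \<longrightarrow> sigma k \<le> sg \<and> sg \<le> g1 * sigma k"
      "rho k < ereal eh1 \<longrightarrow> g1 * sigma k \<le> sg \<and> sg \<le> g2 * sigma k"
      "sigma (Suc k) = max sg smin"
    using sigma_step[of k] by blast
  have "smin \<le> smax"
    using s0 smax_def by simp
  show ?case
  proof (cases "ereal eh2 \<le> rho k")
    case True
    then show ?thesis using sg(1,4) IH \<open>smin \<le> smax\<close> by simp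
  next
    case False
    then have "sigma k < ssucc"
      using very_successful_if_sigma_ge[OF \<open>scp k \<noteq> 0\<close>] by (meson not_le)
    have "g1 * sigma k \<le> g2 * sigma k"
      using gam sigma_pos[of k] by simp
    then have "sg \<le> g2 * sigma k"
      using sg(2,3) False by (cases "rho k < ereal eh1") (auto simp: not_le)
    also have "\<dots> \<le> g2 * ssucc"
      using \<open>sigma k < ssucc\<close> gam by simp
    also have "\<dots> \<le> smax"
      using smax_def by simp
    finally show ?thesis
      using sg(4) \<open>smin \<le> smax\<close> by simp
  qed
qed

lemma numin_pos: "0 < numin"
  unfolding numin_def smax_def using theta A2(1) s0 smin_pos by simp

lemma numin_le_nu:
  assumes "\<And>j. j < k \<Longrightarrow> scp j \<noteq> 0"
  shows "numin \<le> nu k"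
proof -
  have "sigma k \<le> smax"
    using assms by (rule sigma_le_smax)
  then show ?thesis
    unfolding numin_def nu_def
    using theta sigma_pos[of k] onorm_B_nonneg[of k] A2(2)[of k] by (intro frac_le) auto
qed

lemma eta1_pos: "0 < eta1"
proof -
  have "4 * kf * th1 * th2^2 < smin * (eh1 * (1 - th1))"
    using smin theta etah by (simp add: pos_divide_less_eq)
  then have "4 * kf * th1 * th2^2 / ((1 - th1) * smin) < eh1"
    using theta smin_pos by (simp add: pos_divide_less_eq algebra_simps)
  then show ?thesis
    unfolding eta1_def by simp
qed

lemma norm_s_sq_le: "norm (s k)^2 \<le> 2 * th1 * th2^2 / ((1 - th1) * smin) * model_decrease k"
proof -
  have "(1 - th1) * smin * norm (s k)^2 \<le> (1 - th1) * sigma k * norm (s k)^2"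
    using sigma_ge_smin[of k] theta by (intro mult_right_mono mult_left_mono) auto
  also have "\<dots> \<le> 2 * th1 * th2^2 * model_decrease k"
    by (rule sigma_norm_s_sq_le)
  finally show ?thesis
    using theta smin_pos by (simp add: pos_le_divide_eq mult_ac)
qed

lemma successful_objective_decrease:
  assumes "scp k \<noteq> 0" and "ereal eh1 \<le> rho k"
  shows "eta1 * model_decrease k \<le> objective (x k) - objective (x (Suc k))"
proof -
  have "eh1 * model_decrease k \<le> estimated_decrease k"
    using assms(2) model_decrease_pos[OF assms(1)] unfolding rho_eq by (simp add: pos_le_divide_eq)
  moreover have "estimated_decrease k - 2 * kf * norm (s k)^2 \<le> objective (x k) - objective (x k + s k)"
    using A6(1,2)[of k] unfolding objective_def estimated_decrease_def by (simp add: abs_le_iff)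
  moreover have "2 * kf * norm (s k)^2 \<le> 4 * kf * th1 * th2^2 / ((1 - th1) * smin) * model_decrease k"
    using mult_left_mono[OF norm_s_sq_le, of "2 * kf" k] kf_pos by simp
  ultimately have "eta1 * model_decrease k \<le> objective (x k) - objective (x k + s k)"
    unfolding eta1_def left_diff_distrib by linarith
  then show ?thesis
    using x_step[of k] assms(2) by simp
qed

lemma objective_nonincreasing:
  assumes "scp k \<noteq> 0"
  shows "objective (x (Suc k)) \<le> objective (x k)"
proof (cases "ereal eh1 \<le> rho k")
  case True
  then show ?thesis
    using successful_objective_decrease[OF assms True] mult_pos_pos[OF eta1_pos model_decrease_pos[OF assms]]
    by linarith
next
  case False
  then show ?thesis using x_step[of k] by simp
qed

lemma successful_objective_decrease_ge:
  assumes "0 < eps" and "\<And>j. j \<le> k \<Longrightarrow> eps \<le> norm (scp j) / nu j" and "ereal eh1 \<le> rho k"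
  shows "1/2 * eta1 * (1 - th1) * numin * eps^2 \<le> objective (x k) - objective (x (Suc k))"
proof -
  have scp_nonzero: "scp j \<noteq> 0" if "j \<le> k" for j
    using assms(1) assms(2)[OF that] by auto
  have "numin * eps^2 \<le> nu k * (norm (scp k) / nu k)^2"
    using numin_le_nu[of k] scp_nonzero numin_pos assms(1) assms(2)[of k]
    by (intro mult_mono power_mono) auto
  also have "\<dots> = norm (scp k)^2 / nu k"
    using nu_pos[of k] by (simp add: power2_eq_square)
  finally have "eta1 * ((1 - th1) / 2 * (numin * eps^2))
      \<le> eta1 * ((1 - th1) / 2 * (norm (scp k)^2 / nu k))"
    using eta1_pos theta by (intro mult_left_mono) auto
  also have "\<dots> \<le> eta1 * model_decrease k"
    using model_decrease_ge_norm_scp_sq eta1_pos by (intro mult_left_mono) auto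
  also have "\<dots> \<le> objective (x k) - objective (x (Suc k))"
    using successful_objective_decrease[OF scp_nonzero assms(3)] by simp
  finally show ?thesis
    by (simp add: mult_ac)
qed

lemma card_successful_le:
  assumes "0 < eps" and "\<And>k. k < n \<Longrightarrow> eps \<le> norm (scp k) / nu k"
  shows "real (card {k. ereal eh1 \<le> rho k \<and> k < n})
    \<le> (objective (x 0) - low) / (1/2 * eta1 * (1 - th1) * numin) * (1 / eps^2)"
proof -
  let ?c = "1/2 * eta1 * (1 - th1) * numin * eps^2"
  have "?c * card {k. ereal eh1 \<le> rho k \<and> k < n} \<le> objective (x 0) - objective (x n)"
  proof (rule card_mult_le_total_decrease)
    fix k
    assume "k < n"
    then have eps_le: "eps \<le> norm (scp j) / nu j" if "j \<le> k" for j
      using assms(2) that by simp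
    then have "scp k \<noteq> 0"
      using assms(1) by fastforce
    then show "objective (x (Suc k)) \<le> objective (x k)"
      by (rule objective_nonincreasing)
    show "objective (x (Suc k)) + ?c \<le> objective (x k)" if "ereal eh1 \<le> rho k"
      using successful_objective_decrease_ge[OF assms(1) eps_le that] by simp
  qed
  also have "\<dots> \<le> objective (x 0) - low"
    using A7[of "x n"] unfolding objective_def h_eq_hr by simp
  finally have "card {k. ereal eh1 \<le> rho k \<and> k < n} \<le> (objective (x 0) - low) / ?c"
    using eta1_pos numin_pos theta assms(1) by (simp add: pos_le_divide_eq mult.commute)
  then show ?thesis
    by simp
qed

lemma card_successful_before_eps_le:
  assumes "0 < eps"
  shows "ereal (real (card {k. rho k \<ge> ereal eh1 \<and>
                              k < (LEAST k. (1 / nu k) * norm (scp k) < eps)}))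
          \<le> (ereal (f (x 0)) + h (x 0) - ereal low) / ereal (1/2 * eta1 * (1 - th1) * numin)
              * ereal (1 / eps^2)"
proof -
  let ?N = "LEAST k. (1 / nu k) * norm (scp k) < eps"
  let ?c = "1/2 * eta1 * (1 - th1) * numin"
  have "eps \<le> norm (scp k) / nu k" if "k < ?N" for k
    using not_less_Least[OF that] by simp
  then have "real (card {k. ereal eh1 \<le> rho k \<and> k < ?N})
      \<le> (objective (x 0) - low) / ?c * (1 / eps^2)"
    by (rule card_successful_le[OF assms])
  moreover have "(ereal (f (x 0)) + h (x 0) - ereal low) / ereal ?c * ereal (1 / eps^2)
      = ereal ((objective (x 0) - low) / ?c * (1 / eps^2))"
    using eta1_pos numin_pos theta by (simp add: objective_def h_eq_hr)
  ultimately show ?thesis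
    by (simp only: ereal_less_eq(3))
qed

end

theorem lemma3p6:
  fixes f :: "real^'n \<Rightarrow> real" and gradf :: "real^'n \<Rightarrow> real^'n"
    and h :: "real^'n \<Rightarrow> ereal"
    and psi :: "real^'n \<Rightarrow> real^'n \<Rightarrow> ereal"  (* psi s y = \<psi>(s;y) *)
    and Bf :: "real^'n \<Rightarrow> real^'n^'n"
    and fh0 fh1 :: "nat \<Rightarrow> real"  (* accepted values of f^(x_k), f^(x_k+s_k) *)
    and gh :: "nat \<Rightarrow> real^'n"      (* accepted value of grad^ f(x_k) *)
    and x s scp :: "nat \<Rightarrow> real^'n" and sigma :: "nat \<Rightarrow> real"
    and x0 :: "real^'n"
    and kf kg g1 g2 g3 eh1 eh2 th1 th2 smin s0 lam L kB kh low eps :: real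
    and nu :: "nat \<Rightarrow> real" and phi :: "nat \<Rightarrow> real^'n \<Rightarrow> ereal"
    and phicp :: "nat \<Rightarrow> real^'n \<Rightarrow> ereal"
    and xicp :: "nat \<Rightarrow> ereal" and rho :: "nat \<Rightarrow> ereal"
    and eta1 ssucc smax numin :: real
  defines "nu \<equiv> \<lambda>k. th1 / (onorm (\<lambda>v. Bf (x k) *v v) + sigma k)"
    and "phicp \<equiv> \<lambda>k t. ereal (fh0 k + gh k \<bullet> t)"
    and "phi \<equiv> \<lambda>k t. ereal (fh0 k + gh k \<bullet> t + 1/2 * (t \<bullet> (Bf (x k) *v t)))"
    and "xicp \<equiv> \<lambda>k. (phicp k 0 + psi 0 (x k)) - (phicp k (scp k) + psi (scp k) (x k))"
    and "rho \<equiv> \<lambda>k. (ereal (fh0 k) + h (x k) - ereal (fh1 k) - h (x k + s k)) /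
                     (phi k 0 + psi 0 (x k) - phi k (s k) - psi (s k) (x k))"
    and "eta1 \<equiv> eh1 - 4 * kf * th1 * th2^2 / ((1 - th1) * smin)"
    and "ssucc \<equiv> max (th1 * th2^2 * (L + kB + 2*kh + 4*kf + 2*kg) / ((1 - th1) * (1 - eh2))) (1/lam)"
    and "smax \<equiv> max s0 (g2 * ssucc)"
    and "numin \<equiv> th1 / (kB + smax)"
  assumes
    (* setting *)
        f_grad: "\<And>y. (f has_derivative (\<lambda>d. gradf y \<bullet> d)) (at y)"
    and grad_cont: "continuous_on UNIV gradf"
    and h_proper: "proper_fun h" and h_lsc: "lsc h"
    and psi_proper: "\<And>y. proper_fun (\<lambda>t. psi t y)"
    and psi_lsc: "\<And>y. lsc (\<lambda>t. psi t y)"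
    and psi_0: "\<And>y. psi 0 y = h y"
    and psi_subdiff: "\<And>y. limiting_subdiff (\<lambda>t. psi t y) 0 \<subseteq> limiting_subdiff h y"
    and lam_pos: "lam > 0"
    and prox_bdd: "\<And>y l'. 0 < l' \<Longrightarrow> l' < lam \<Longrightarrow>
                     \<exists>b::real. \<forall>w. psi w y + ereal (1 / (2 * l') * (norm w)^2) \<ge> ereal b"
    and B_sym: "\<And>y. transpose (Bf y) = Bf y"
    (* constants *)
    and kf_pos: "kf > 0" and kg_pos: "kg > 0"
    and gam: "0 < g3" "g3 \<le> 1" "1 < g1" "g1 \<le> g2"
    and etah: "0 < eh1" "eh1 \<le> eh2" "eh2 < 1"
    and theta: "0 < th1" "th1 < 1" "1 < th2"
    and smin: "smin > 4 * kf * th1 * th2^2 / (eh1 * (1 - th1))"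
    and s0: "s0 \<ge> smin"
    (* algorithm iR2N *)
    and init: "x 0 = x0" "sigma 0 = s0"
    and cp_step: "\<And>k. phicp k (scp k) + ereal (1/2 * (1 / nu k) * (norm (scp k))^2) + psi (scp k) (x k)
                     \<le> phicp k 0 + ereal (1/2 * (1 / nu k) * (norm (0::real^'n))^2) + psi 0 (x k)"
    and s_step: "\<And>k. \<exists>t. phi k t + ereal (1/2 * sigma k * (norm t)^2) + psi t (x k)
                          \<le> phi k (scp k) + ereal (1/2 * sigma k * (norm (scp k))^2) + psi (scp k) (x k)
                        \<and> s k = (if norm t > th2 * norm (scp k) then scp k else t)"
    and x_step: "\<And>k. x (Suc k) = (if rho k \<ge> ereal eh1 then x k + s k else x k)"
    and sigma_step: "\<And>k. \<exists>sg. (rho k \<ge> ereal eh2 \<longrightarrow> g3 * sigma k \<le> sg \<and> sg \<le> sigma k)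
                       \<and> (ereal eh1 \<le> rho k \<and> rho k < ereal eh2 \<longrightarrow> sigma k \<le> sg \<and> sg \<le> g1 * sigma k)
                       \<and> (rho k < ereal eh1 \<longrightarrow> g1 * sigma k \<le> sg \<and> sg \<le> g2 * sigma k)
                       \<and> sigma (Suc k) = max sg smin"
    (* assumptions *)
    and A1: "L \<ge> 0" "\<And>y t. \<bar>f (y + t) - f y - gradf y \<bullet> t\<bar> \<le> 1/2 * L * (norm t)^2"
    and A2: "kB > 0" "\<And>k. onorm (\<lambda>v. Bf (x k) *v v) \<le> kB"
    and A3: "kh > 0" "\<And>y t. \<bar>psi t y - h (y + t)\<bar> \<le> ereal (kh * (norm t)^2)"
    and A4: "\<And>k. phi k 0 + psi 0 (x k) - (phi k (s k) + psi (s k) (x k)) \<ge> ereal (1 - th1) * xicp k"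
    and A6: "\<And>k. \<bar>f (x k) - fh0 k\<bar> \<le> kf * (norm (s k))^2"
            "\<And>k. \<bar>f (x k + s k) - fh1 k\<bar> \<le> kf * (norm (s k))^2"
            "\<And>k. norm (gradf (x k) - gh k) \<le> kg * norm (s k)"
    and A7: "\<And>y. ereal (f y) + h y \<ge> ereal low"
    (* infinitely many successful iterations *)
    and inf_succ: "infinite {k. rho k \<ge> ereal eh1}"
    and eps_pos: "eps > 0"
  shows "ereal (real (card {k. rho k \<ge> ereal eh1 \<and>
                              k < (LEAST k. (1 / nu k) * norm (scp k) < eps)}))
          \<le> (ereal (f x0) + h x0 - ereal low) / ereal (1/2 * eta1 * (1 - th1) * numin)
              * ereal (1 / eps^2)"
proof -
  interpret ir2n_run f gradf h psi "\<lambda>y. real_of_ereal (h y)" "\<lambda>t y. real_of_ereal (psi t y)"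
      "\<lambda>k v. Bf (x k) *v v" fh0 fh1 gh x s scp sigma nu phi phicp xicp rho
      kf kg g1 g2 g3 eh1 eh2 th1 th2 smin s0 L kB kh low eta1 ssucc smax numin
    by (rule ir2n_run.intro;
        (rule psi_0 matrix_vector_mul_bounded_linear kf_pos kg_pos gam etah theta smin s0 init
          cp_step s_step x_step sigma_step A1 A2 A3 A4 A6 A7
          abs_ereal_diff_le_imp_real(1)[OF A3(2)]
          abs_ereal_diff_le_imp_real(2)[OF A3(2)[of 0, unfolded add_0_right]])?;
        simp add: assms(1-9))
  show ?thesis
    using card_successful_before_eps_le[OF eps_pos] init(1) by simp
qed

end
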